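(* Let $\mathbb{K}$ be an algebraically closed field of characteristic zero and $N=2m\ge 2$ even. Then $\operatorname{Der}(\mathcal{H}_{N})\cong \mathcal{H}_{N}$.
   Context: Let $A_N=\mathbb{K}[t_1^{\pm1},\dots,t_N^{\pm1}]$, $d_i=t_i\frac{\partial}{\partial t_i}$, and $t^{\bm r}=t_1^{r_1}\cdots t_N^{r_N}$ for $\bm r\in\mathbb{Z}^N$. Let $(\cdot,\cdot)$ be the standard bilinear form on $\mathbb{K}^N$, $(e_i,e_j)=\delta_{ij}$. For $u\in\mathbb{K}^N$, $\bm r\in\mathbb{Z}^N$ put $D(u,\bm r)=\sum_i u_i t^{\bm r}d_i$. Let $\bm J=\begin{pmatrix} O_m & I_m\\ -I_m & O_m\end{pmatrix}$, $\overline{\bm r}=\bm J\bm r$, $h_{\bm r}=D(\overline{\bm r},\bm r)$ (so $h_{\bm 0}=0$), $\mathfrak h=\operatorname{span}_{\mathbb{K}}\{d_1,\dots,d_N\}$. The Hamiltonian Lie algebra is $\mathcal{H}_N=\operatorname{span}_{\mathbb{K}}\{h_{\bm r}:\bm r\ne\bm 0\}\oplus\mathfrak h$ with commutator bracket, $[h_{\bm r},h_{\bm s}]=(\overline{\bm r},\bm s)h_{\bm r+\bm s}$, $[D(u,\bm 0),h_{\bm r}]=(u,\bm r)h_{\bm r}$. $\operatorname{Der}$ denotes the Lie algebra of derivations. *)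

theory Defs
  imports "HOL-Computational_Algebra.Polynomial"
begin

text \<open>An element sum_r f(r) h_r + D(u,0) is encoded as the pair (f, u), where
  f : Z^N -> K is finitely supported on nonzero lattice points (lattice points
  are functions nat => int vanishing at indices >= N) and u : nat => K
  vanishes at indices >= N.\<close>

type_synonym 'k ham = "((nat \<Rightarrow> int) \<Rightarrow> 'k) \<times> (nat \<Rightarrow> 'k)"

definition lattice :: "nat \<Rightarrow> (nat \<Rightarrow> int) set" where
  "lattice N = {r. \<forall>i\<ge>N. r i = 0}"

text \<open>(J r, s) for J = [[0, I_m],[-I_m, 0]], i.e. (rbar, s).\<close>
definition Jpair :: "nat \<Rightarrow> (nat \<Rightarrow> int) \<Rightarrow> (nat \<Rightarrow> int) \<Rightarrow> int" where
  "Jpair m r s = (\<Sum>i<m. r (i + m) * s i - r i * s (i + m))"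

definition upair :: "nat \<Rightarrow> (nat \<Rightarrow> 'k::field) \<Rightarrow> (nat \<Rightarrow> int) \<Rightarrow> 'k" where
  "upair N u s = (\<Sum>i<N. u i * of_int (s i))"

definition ham_carrier :: "nat \<Rightarrow> ('k::field) ham set" where
  "ham_carrier m = {(f, u).
      finite {r. f r \<noteq> 0} \<and>
      (\<forall>r. f r \<noteq> 0 \<longrightarrow> r \<in> lattice (2*m) \<and> r \<noteq> (\<lambda>_. 0)) \<and>
      (\<forall>i\<ge>2*m. u i = 0)}"

definition ham_zero :: "('k::field) ham" where
  "ham_zero = (\<lambda>_. 0, \<lambda>_. 0)"

definition ham_add :: "('k::field) ham \<Rightarrow> 'k ham \<Rightarrow> 'k ham" where
  "ham_add x y = (\<lambda>r. fst x r + fst y r, \<lambda>i. snd x i + snd y i)"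

definition ham_scale :: "'k::field \<Rightarrow> 'k ham \<Rightarrow> 'k ham" where
  "ham_scale c x = (\<lambda>r. c * fst x r, \<lambda>i. c * snd x i)"

text \<open>Lie bracket: [h_r, h_s] = (rbar, s) h_(r+s) (with h_0 = 0),
  [D(u,0), h_r] = (u, r) h_r, [D(u,0), D(v,0)] = 0, extended bilinearly.\<close>
definition ham_bracket :: "nat \<Rightarrow> ('k::field) ham \<Rightarrow> 'k ham \<Rightarrow> 'k ham" where
  "ham_bracket m x y =
     (\<lambda>s. if s = (\<lambda>_. 0) then 0 else
            (\<Sum>r\<in>{r. fst x r \<noteq> 0}. fst x r * fst y (\<lambda>i. s i - r i) * of_int (Jpair m r (\<lambda>i. s i - r i)))
            + upair (2*m) (snd x) s * fst y s - upair (2*m) (snd y) s * fst x s,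
      \<lambda>_. 0)"

text \<open>Derivations of H_N: linear maps of the carrier into itself satisfying the
  Leibniz rule; they are taken extensional (zero outside the carrier) so that
  they are determined by their values on H_N.\<close>
definition ham_derivations :: "nat \<Rightarrow> (('k::field) ham \<Rightarrow> 'k ham) set" where
  "ham_derivations m = {D.
     (\<forall>x\<in>ham_carrier m. D x \<in> ham_carrier m) \<and>
     (\<forall>x\<in>ham_carrier m. \<forall>y\<in>ham_carrier m. \<forall>a b.
         D (ham_add (ham_scale a x) (ham_scale b y)) = ham_add (ham_scale a (D x)) (ham_scale b (D y))) \<and>
     (\<forall>x\<in>ham_carrier m. \<forall>y\<in>ham_carrier m.
         D (ham_bracket m x y) = ham_add (ham_bracket m (D x) y) (ham_bracket m x (D y))) \<and>
     (\<forall>x. x \<notin> ham_carrier m \<longrightarrow> D x = ham_zero)}"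

definition der_add :: "nat \<Rightarrow> (('k::field) ham \<Rightarrow> 'k ham) \<Rightarrow> ('k ham \<Rightarrow> 'k ham) \<Rightarrow> ('k ham \<Rightarrow> 'k ham)" where
  "der_add m D E = (\<lambda>x. if x \<in> ham_carrier m then ham_add (D x) (E x) else ham_zero)"

definition der_scale :: "nat \<Rightarrow> 'k::field \<Rightarrow> ('k ham \<Rightarrow> 'k ham) \<Rightarrow> ('k ham \<Rightarrow> 'k ham)" where
  "der_scale m c D = (\<lambda>x. if x \<in> ham_carrier m then ham_scale c (D x) else ham_zero)"

definition der_bracket :: "nat \<Rightarrow> (('k::field) ham \<Rightarrow> 'k ham) \<Rightarrow> ('k ham \<Rightarrow> 'k ham) \<Rightarrow> ('k ham \<Rightarrow> 'k ham)" where
  "der_bracket m D E = (\<lambda>x. if x \<in> ham_carrier m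
       then ham_add (D (E x)) (ham_scale (-1) (E (D x))) else ham_zero)"

definition der_ham_iso :: "nat \<Rightarrow> ((('k::field) ham \<Rightarrow> 'k ham) \<Rightarrow> 'k ham) \<Rightarrow> bool" where
  "der_ham_iso m \<phi> \<longleftrightarrow>
     bij_betw \<phi> (ham_derivations m) (ham_carrier m) \<and>
     (\<forall>D\<in>ham_derivations m. \<forall>E\<in>ham_derivations m. \<forall>a b.
        \<phi> (der_add m (der_scale m a D) (der_scale m b E)) = ham_add (ham_scale a (\<phi> D)) (ham_scale b (\<phi> E))) \<and>
     (\<forall>D\<in>ham_derivations m. \<forall>E\<in>ham_derivations m.
        \<phi> (der_bracket m D E) = ham_bracket m (\<phi> D) (\<phi> E))"

end

theory Submission
  imports Defs
begin

text \<open>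
  Each \<open>x\<close> in \<open>H_N\<close> gives the inner derivation \<open>ad x\<close>, and \<open>ad\<close> is injective because the centre is
  trivial: bracketing with \<open>d_j\<close> multiplies the coefficient of \<open>h_t\<close> by \<open>-t_j\<close>, and bracketing
  with \<open>h_(e_j)\<close> recovers the toral part. For surjectivity let \<open>D\<close> be a derivation. Applying
  \<open>D\<close> to \<open>[d_i, d_j] = 0\<close> shows that the \<open>h\<close>-parts \<open>f_i\<close> of \<open>D d_i\<close> satisfy
  \<open>t_j f_i(t) = t_i f_j(t)\<close>, so \<open>f_i(t) = t_i g(t)\<close> for a single finitely supported \<open>g\<close>;
  subtracting \<open>ad (-g)\<close> leaves a derivation \<open>E\<close> mapping every \<open>d_k\<close> into \<open>span {d_i}\<close>.
  Comparing weights in \<open>E [d_k, h_r] = r_k E h_r\<close> gives \<open>E h_r = c(r) h_r\<close> and \<open>E d_k = 0\<close>,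
  and \<open>E [h_r, h_s] = (rbar, s) E h_(r+s)\<close> gives \<open>c(r + s) = c(r) + c(s)\<close> whenever
  \<open>(rbar, s) \<noteq> 0\<close>. The symplectic form is nondegenerate, so a degenerate pair can be bypassed
  through a third vector; hence \<open>c\<close> is additive on \<open>\<int>^N\<close>, i.e. \<open>c = (u, -)\<close>, and
  \<open>E = ad D(u, 0)\<close>.
\<close>

section \<open>The lattice and the two pairings\<close>

definition unit_vec :: "nat \<Rightarrow> nat \<Rightarrow> int" where
  "unit_vec j = (\<lambda>i. if i = j then 1 else 0)"

lemma lattice_add [simp]: "r \<in> lattice N \<Longrightarrow> s \<in> lattice N \<Longrightarrow> (\<lambda>i. r i + s i) \<in> lattice N"
  and lattice_zero [simp]: "(\<lambda>_. 0) \<in> lattice N"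
  and unit_vec_in_lattice [simp]: "j < N \<Longrightarrow> unit_vec j \<in> lattice N"
  by (auto simp: lattice_def unit_vec_def)

lemma unit_vec_neq_0 [simp]: "unit_vec j \<noteq> (\<lambda>_. 0)"
  by (auto simp: unit_vec_def fun_eq_iff)

lemma lattice_nonzero_coordinate:
  assumes "r \<in> lattice N" and "r \<noteq> (\<lambda>_. 0)"
  obtains k where "k < N" and "r k \<noteq> 0"
proof -
  obtain k where "r k \<noteq> 0" using assms(2) by auto
  moreover from this have "k < N" using assms(1) by (auto simp: lattice_def not_less[symmetric])
  ultimately show ?thesis by (rule that[rotated])
qed

lemma upair_add [simp]: "upair N (\<lambda>i. u i + v i) s = upair N u s + upair N v s"
  by (simp add: upair_def sum.distrib algebra_simps)

lemma upair_scale [simp]: "upair N (\<lambda>i. a * u i) s = a * upair N u s"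
  by (simp add: upair_def sum_distrib_left algebra_simps)

lemma upair_zero [simp]: "upair N (\<lambda>_. 0) s = 0"
  by (simp add: upair_def)

lemma upair_unit_vec [simp]: "j < N \<Longrightarrow> upair N u (unit_vec j) = u j"
  by (simp add: upair_def unit_vec_def if_distrib cong: if_cong)

lemma Jpair_add_left [simp]: "Jpair m (\<lambda>i. r i + s i) t = Jpair m r t + Jpair m s t"
  by (simp add: Jpair_def sum.distrib[symmetric] algebra_simps)

lemma Jpair_add_right [simp]: "Jpair m r (\<lambda>i. s i + t i) = Jpair m r s + Jpair m r t"
  by (simp add: Jpair_def sum.distrib[symmetric] algebra_simps)

lemma Jpair_scale_right [simp]: "Jpair m r (\<lambda>i. n * t i) = n * Jpair m r t"
  by (simp add: Jpair_def sum_distrib_left algebra_simps)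

lemma Jpair_zero_left [simp]: "Jpair m (\<lambda>_. 0) r = 0"
  and Jpair_zero_right [simp]: "Jpair m r (\<lambda>_. 0) = 0"
  by (simp_all add: Jpair_def)

lemma Jpair_antisym: "Jpair m r s = - Jpair m s r"
  by (simp add: Jpair_def sum_negf[symmetric] algebra_simps)

lemma Jpair_self [simp]: "Jpair m r r = 0"
  using Jpair_antisym[of m r r] by simp

lemma Jpair_unit_vec_low: "j < m \<Longrightarrow> Jpair m r (unit_vec j) = r (j + m)"
  by (simp add: Jpair_def unit_vec_def if_distrib[of "\<lambda>c. _ * c"] cong: if_cong)

lemma Jpair_unit_vec_high: "j < m \<Longrightarrow> Jpair m r (unit_vec (j + m)) = - r j"
  by (simp add: Jpair_def unit_vec_def if_distrib[of "\<lambda>c. _ * c"] sum_negf cong: if_cong)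

lemma Jpair_nondegenerate:
  assumes "r \<in> lattice (2*m)" and "r \<noteq> (\<lambda>_. 0)"
  obtains j where "j < 2*m" and "Jpair m r (unit_vec j) \<noteq> 0"
proof -
  obtain k where k: "k < 2*m" "r k \<noteq> 0" using assms by (rule lattice_nonzero_coordinate)
  show ?thesis
  proof (cases "k < m")
    case True
    then show ?thesis using k by (intro that[of "k + m"]) (simp_all add: Jpair_unit_vec_high)
  next
    case False
    then have "Jpair m r (unit_vec (k - m)) = r k" using k(1) by (simp add: Jpair_unit_vec_low)
    then show ?thesis using k by (intro that[of "k - m"]) simp_all
  qed
qed

lemma finite_affine_zeros_int:
  assumes "a \<noteq> 0 \<or> b \<noteq> 0"
  shows "finite {n::int. a + n * b = 0}"
proof (cases "b = 0")
  case False
  then have "{n::int. a + n * b = 0} \<subseteq> {- a div b}"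
    by (auto simp: eq_neg_iff_add_eq_0[symmetric])
  then show ?thesis by (rule finite_subset) simp
qed (use assms in simp)

lemma exists_lattice_point_Jpair_nonzero:
  assumes "finite R" and "R \<subseteq> lattice (2*m) - {\<lambda>_. 0}"
  shows "\<exists>t\<in>lattice (2*m). \<forall>r\<in>R. Jpair m r t \<noteq> 0"
  using assms
proof (induction R rule: finite_induct)
  case (insert r R)
  then obtain t where t: "t \<in> lattice (2*m)" "\<forall>q\<in>R. Jpair m q t \<noteq> 0" by auto
  obtain j where j: "j < 2*m" "Jpair m r (unit_vec j) \<noteq> 0"
    using insert.prems by (auto elim: Jpair_nondegenerate)
  \<comment> \<open>Moving \<open>t\<close> along \<open>unit_vec j\<close>: each constraint fails for only finitely many steps \<open>n\<close>.\<close>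
  let ?bad = "\<lambda>q. {n. Jpair m q t + n * Jpair m q (unit_vec j) = 0}"
  have "finite (\<Union>q\<in>insert r R. ?bad q)"
    using finite_affine_zeros_int j(2) t(2) insert.hyps(1) by auto
  then obtain n where n: "n \<notin> (\<Union>q\<in>insert r R. ?bad q)"
    using ex_new_if_finite[OF infinite_UNIV_int] by blast
  have "(\<lambda>i. t i + n * unit_vec j i) \<in> lattice (2*m)"
    using t(1) j(1) by (auto simp: lattice_def unit_vec_def)
  moreover have "\<forall>q\<in>insert r R. Jpair m q (\<lambda>i. t i + n * unit_vec j i) \<noteq> 0"
    using n by auto
  ultimately show ?case by blast
qed (auto intro: lattice_zero)

lemma Jpair_additive_extends:
  fixes c :: "(nat \<Rightarrow> int) \<Rightarrow> 'a::ab_group_add"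
  assumes c0: "c (\<lambda>_. 0) = 0"
    and add: "\<And>r s. r \<in> lattice (2*m) \<Longrightarrow> s \<in> lattice (2*m) \<Longrightarrow> Jpair m r s \<noteq> 0 \<Longrightarrow>
      c (\<lambda>i. r i + s i) = c r + c s"
    and r: "r \<in> lattice (2*m)" and s: "s \<in> lattice (2*m)"
  shows "c (\<lambda>i. r i + s i) = c r + c s"
proof (cases "Jpair m r s = 0 \<and> r \<noteq> (\<lambda>_. 0) \<and> s \<noteq> (\<lambda>_. 0)")
  case True
  let ?rs = "\<lambda>i. r i + s i"
  have "?rs \<in> lattice (2*m)" using r s by simp
  then have "{r, s, ?rs} - {\<lambda>_. 0} \<subseteq> lattice (2*m) - {\<lambda>_. 0}" using r s by blast
  then obtain t where t: "t \<in> lattice (2*m)" "\<forall>q\<in>{r, s, ?rs} - {\<lambda>_. 0}. Jpair m q t \<noteq> 0"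
    using exists_lattice_point_Jpair_nonzero[of "{r, s, ?rs} - {\<lambda>_. 0}"] by blast
  \<comment> \<open>Go around the degenerate pair through \<open>r + (s + t) = (r + s) + t\<close>.\<close>
  have "c (\<lambda>i. r i + (s i + t i)) = c r + c (\<lambda>i. s i + t i)"
    using add[of r "\<lambda>i. s i + t i"] True r s t by simp
  moreover have "c (\<lambda>i. s i + t i) = c s + c t"
    using add[of s t] True s t by simp
  moreover have "c (\<lambda>i. ?rs i + t i) = c ?rs + c t"
  proof (cases "?rs = (\<lambda>_. 0)")
    case True
    then have "(\<lambda>i. ?rs i + t i) = t" by (simp add: fun_eq_iff)
    with True show ?thesis by (simp add: c0)
  next
    case False
    then have "Jpair m ?rs t \<noteq> 0" using t(2) by blast
    then show ?thesis using add[of ?rs t] r s t(1) by simp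
  qed
  ultimately have "c ?rs + c t = c r + c s + c t"
    by (simp add: add.assoc)
  then show ?thesis by simp
next
  case False
  then show ?thesis using add[OF r s] c0 by auto
qed

lemma lattice_additive_eq_upair:
  fixes c :: "(nat \<Rightarrow> int) \<Rightarrow> 'k::field"
  assumes add: "\<And>r s. r \<in> lattice N \<Longrightarrow> s \<in> lattice N \<Longrightarrow> c (\<lambda>i. r i + s i) = c r + c s"
    and r: "r \<in> lattice N"
  shows "c r = upair N (\<lambda>i. c (unit_vec i)) r"
proof -
  have c0: "c (\<lambda>_. 0) = 0"
    using add[OF lattice_zero lattice_zero] by (metis add_cancel_right_right)
  have c_int: "c (\<lambda>i. z * v i) = of_int z * c v" if v: "v \<in> lattice N" for v z
  proof (induction z rule: int_induct[where k = 0])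
    case (step1 z)
    have "(\<lambda>i. z * v i) \<in> lattice N" using v by (auto simp: lattice_def)
    from add[OF this v] have "c (\<lambda>i. z * v i + v i) = c (\<lambda>i. z * v i) + c v" .
    moreover have "(\<lambda>i. z * v i + v i) = (\<lambda>i. (z + 1) * v i)" by (simp add: algebra_simps)
    ultimately show ?case using step1.IH by (simp add: algebra_simps)
  next
    case (step2 z)
    have "(\<lambda>i. (z - 1) * v i) \<in> lattice N" using v by (auto simp: lattice_def)
    from add[OF this v] have "c (\<lambda>i. (z - 1) * v i + v i) = c (\<lambda>i. (z - 1) * v i) + c v" .
    moreover have "(\<lambda>i. (z - 1) * v i + v i) = (\<lambda>i. z * v i)" by (simp add: algebra_simps)
    ultimately show ?case using step2.IH by (simp add: algebra_simps)
  qed (simp add: c0)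
  let ?trunc = "\<lambda>k i. if i < k then r i else 0"
  have "c (?trunc k) = (\<Sum>i<k. c (unit_vec i) * of_int (r i))" if "k \<le> N" for k
    using that
  proof (induction k)
    case (Suc k)
    have "?trunc k \<in> lattice N"
      using r by (auto simp: lattice_def)
    moreover have "(\<lambda>i. r k * unit_vec k i) \<in> lattice N"
      using Suc.prems by (auto simp: lattice_def unit_vec_def)
    ultimately have "c (\<lambda>i. ?trunc k i + r k * unit_vec k i) = c (?trunc k) + c (\<lambda>i. r k * unit_vec k i)"
      by (rule add)
    moreover have "(\<lambda>i. ?trunc k i + r k * unit_vec k i) = ?trunc (Suc k)"
      by (auto simp: fun_eq_iff unit_vec_def less_Suc_eq)
    ultimately show ?case
      using c_int[of "unit_vec k" "r k"] Suc by (simp add: mult.commute)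
  qed (simp add: c0)
  moreover have "?trunc N = r" using r by (auto simp: fun_eq_iff lattice_def)
  ultimately show ?thesis by (metis order_refl upair_def)
qed

lemma common_factor_of_proportional:
  fixes f :: "nat \<Rightarrow> (nat \<Rightarrow> int) \<Rightarrow> 'k::field_char_0"
  assumes proportional: "\<And>i j t. i < N \<Longrightarrow> j < N \<Longrightarrow> of_int (t j) * f i t = of_int (t i) * f j t"
    and supp: "\<And>i t. i < N \<Longrightarrow> f i t \<noteq> 0 \<Longrightarrow> t \<in> lattice N \<and> t \<noteq> (\<lambda>_. 0)"
  obtains g where "\<And>i t. i < N \<Longrightarrow> f i t = of_int (t i) * g t"
    and "\<And>t. g t \<noteq> 0 \<Longrightarrow> \<exists>i<N. f i t \<noteq> 0"
proof -
  define K where "K t = (LEAST k. t k \<noteq> 0)" for t :: "nat \<Rightarrow> int"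
  have K: "K t < N \<and> t (K t) \<noteq> 0" if t: "t \<in> lattice N \<and> t \<noteq> (\<lambda>_. 0)" for t
  proof -
    obtain k where k: "k < N" "t k \<noteq> 0"
      using t lattice_nonzero_coordinate by blast
    have "t (K t) \<noteq> 0" unfolding K_def using k(2) by (rule LeastI)
    moreover have "K t \<le> k" unfolding K_def using k(2) by (rule Least_le)
    ultimately show ?thesis using k(1) by simp
  qed
  define g where "g t = (if t \<in> lattice N \<and> t \<noteq> (\<lambda>_. 0) then f (K t) t / of_int (t (K t)) else 0)" for t
  have "f i t = of_int (t i) * g t" if "i < N" for i t
  proof (cases "t \<in> lattice N \<and> t \<noteq> (\<lambda>_. 0)")
    case True
    then have "K t < N" and nz: "(of_int (t (K t)) :: 'k) \<noteq> 0" using K by auto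
    with proportional[OF that this(1)] have "f i t = of_int (t i) * f (K t) t / of_int (t (K t))"
      by (simp add: eq_divide_eq mult.commute)
    with True show ?thesis by (simp add: g_def)
  qed (use supp[OF that] in \<open>auto simp: g_def\<close>)
  moreover have "\<exists>i<N. f i t \<noteq> 0" if "g t \<noteq> 0" for t
    using that K by (auto simp: g_def split: if_splits)
  ultimately show ?thesis by (rule that)
qed

section \<open>The standard basis and the bracket\<close>

definition ham_h :: "(nat \<Rightarrow> int) \<Rightarrow> 'k::field ham" where
  "ham_h r = (\<lambda>s. if s = r \<and> r \<noteq> (\<lambda>_. 0) then 1 else 0, \<lambda>_. 0)"

definition ham_d :: "nat \<Rightarrow> 'k::field ham" where
  "ham_d i = (\<lambda>_. 0, \<lambda>j. if j = i then 1 else 0)"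

text \<open>\<open>ham_h\<close> of the zero vector is \<open>ham_zero\<close> (\<open>h_0 = 0\<close>), so letting \<open>r\<close> range over the whole
  lattice adds no new element but spares side conditions \<open>r \<noteq> 0\<close> throughout.\<close>

definition ham_basis :: "nat \<Rightarrow> 'k::field ham \<Rightarrow> bool" where
  "ham_basis m b \<longleftrightarrow> (\<exists>r\<in>lattice (2*m). b = ham_h r) \<or> (\<exists>i<2*m. b = ham_d i)"

lemma ham_carrierI:
  assumes "finite {r. fst x r \<noteq> 0}"
    and "\<And>r. fst x r \<noteq> 0 \<Longrightarrow> r \<in> lattice (2*m) \<and> r \<noteq> (\<lambda>_. 0)"
    and "\<And>i. 2*m \<le> i \<Longrightarrow> snd x i = 0"
  shows "x \<in> ham_carrier m"
  using assms by (cases x) (auto simp: ham_carrier_def)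

lemma ham_carrierD:
  assumes "x \<in> ham_carrier m"
  shows "finite {r. fst x r \<noteq> 0}"
    and "\<And>r. fst x r \<noteq> 0 \<Longrightarrow> r \<in> lattice (2*m)"
    and "\<And>r. fst x r \<noteq> 0 \<Longrightarrow> r \<noteq> (\<lambda>_. 0)"
    and "\<And>i. 2*m \<le> i \<Longrightarrow> snd x i = 0"
  using assms by (auto simp: ham_carrier_def split: prod.splits)

lemma ham_carrier_fst_eq_0:
  assumes "x \<in> ham_carrier m" and "r \<notin> lattice (2*m) \<or> r = (\<lambda>_. 0)"
  shows "fst x r = 0"
  using ham_carrierD[OF assms(1)] assms(2) by blast

lemma ham_zero_in_carrier [simp]: "ham_zero \<in> ham_carrier m"
  by (rule ham_carrierI) (auto simp: ham_zero_def)

lemma ham_add_in_carrier [simp]: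
  assumes "x \<in> ham_carrier m" and "y \<in> ham_carrier m"
  shows "ham_add x y \<in> ham_carrier m"
proof (rule ham_carrierI)
  have "{r. fst (ham_add x y) r \<noteq> 0} \<subseteq> {r. fst x r \<noteq> 0} \<union> {r. fst y r \<noteq> 0}"
    by (auto simp: ham_add_def)
  then show "finite {r. fst (ham_add x y) r \<noteq> 0}"
    using ham_carrierD(1)[OF assms(1)] ham_carrierD(1)[OF assms(2)] by (meson finite_UnI finite_subset)
next
  fix r assume "fst (ham_add x y) r \<noteq> 0"
  then have "fst x r \<noteq> 0 \<or> fst y r \<noteq> 0" by (auto simp: ham_add_def)
  then show "r \<in> lattice (2*m) \<and> r \<noteq> (\<lambda>_. 0)"
    using ham_carrierD[OF assms(1)] ham_carrierD[OF assms(2)] by blast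
qed (use ham_carrierD(4)[OF assms(1)] ham_carrierD(4)[OF assms(2)] in \<open>simp add: ham_add_def\<close>)

lemma ham_scale_in_carrier [simp]:
  assumes "x \<in> ham_carrier m"
  shows "ham_scale a x \<in> ham_carrier m"
proof (rule ham_carrierI)
  have "{r. fst (ham_scale a x) r \<noteq> 0} \<subseteq> {r. fst x r \<noteq> 0}"
    by (auto simp: ham_scale_def)
  then show "finite {r. fst (ham_scale a x) r \<noteq> 0}"
    using ham_carrierD(1)[OF assms] by (rule finite_subset)
qed (use ham_carrierD[OF assms] in \<open>auto simp: ham_scale_def\<close>)

lemma ham_h_in_carrier [simp]: "r \<in> lattice (2*m) \<Longrightarrow> ham_h r \<in> ham_carrier m"
  by (rule ham_carrierI) (auto simp: ham_h_def split: if_splits)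

lemma ham_d_in_carrier [simp]: "i < 2*m \<Longrightarrow> ham_d i \<in> ham_carrier m"
  by (rule ham_carrierI) (auto simp: ham_d_def)

lemma ham_basis_h: "r \<in> lattice (2*m) \<Longrightarrow> ham_basis m (ham_h r)"
  and ham_basis_d: "i < 2*m \<Longrightarrow> ham_basis m (ham_d i)"
  unfolding ham_basis_def by blast+

lemma ham_basis_in_carrier: "ham_basis m b \<Longrightarrow> b \<in> ham_carrier m"
  by (auto simp: ham_basis_def)

lemma ham_basis_cases [consumes 1, case_names h d]:
  assumes "ham_basis m b"
  obtains (h) r where "r \<in> lattice (2*m)" and "b = ham_h r"
    | (d) i where "i < 2*m" and "b = ham_d i"
  using assms unfolding ham_basis_def by blast

lemma fst_ham_h: "fst (ham_h r) s = (if s = r \<and> r \<noteq> (\<lambda>_. 0) then 1 else 0)"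
  and snd_ham_h [simp]: "snd (ham_h r) = (\<lambda>_. 0)"
  and fst_ham_d [simp]: "fst (ham_d i) = (\<lambda>_. 0)"
  by (simp_all add: ham_h_def ham_d_def)

lemma upair_snd_ham_d [simp]: "i < N \<Longrightarrow> upair N (snd (ham_d i)) s = of_int (s i)"
  by (simp add: upair_def ham_d_def if_distrib[of "\<lambda>c. c * _"] cong: if_cong)

lemmas ham_ops_pointwise = prod_eq_iff fun_eq_iff ham_add_def ham_scale_def ham_zero_def

lemma snd_ham_bracket [simp]: "snd (ham_bracket m x y) = (\<lambda>_. 0)"
  by (simp add: ham_bracket_def)

lemma fst_ham_bracket_sum_over:
  assumes "finite S" and "{r. fst x r \<noteq> 0} \<subseteq> S"
  shows "fst (ham_bracket m x y) s = (if s = (\<lambda>_. 0) then 0 else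
     (\<Sum>r\<in>S. fst x r * fst y (\<lambda>i. s i - r i) * of_int (Jpair m r (\<lambda>i. s i - r i)))
     + upair (2*m) (snd x) s * fst y s - upair (2*m) (snd y) s * fst x s)"
proof -
  have "(\<Sum>r | fst x r \<noteq> 0. fst x r * fst y (\<lambda>i. s i - r i) * of_int (Jpair m r (\<lambda>i. s i - r i)))
      = (\<Sum>r\<in>S. fst x r * fst y (\<lambda>i. s i - r i) * of_int (Jpair m r (\<lambda>i. s i - r i)))"
    by (rule sum.mono_neutral_left) (use assms in auto)
  then show ?thesis by (simp add: ham_bracket_def)
qed

lemma fst_ham_bracket_neq_0D:
  assumes "fst (ham_bracket m x y) s \<noteq> 0"
  shows "s \<noteq> (\<lambda>_. 0)"
    and "fst x s \<noteq> 0 \<or> fst y s \<noteq> 0 \<or> (\<exists>r. fst x r \<noteq> 0 \<and> fst y (\<lambda>i. s i - r i) \<noteq> 0)"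
proof -
  show "s \<noteq> (\<lambda>_. 0)" using assms by (auto simp: ham_bracket_def)
  show "fst x s \<noteq> 0 \<or> fst y s \<noteq> 0 \<or> (\<exists>r. fst x r \<noteq> 0 \<and> fst y (\<lambda>i. s i - r i) \<noteq> 0)"
  proof (rule ccontr)
    assume "\<not> ?thesis"
    then have "fst (ham_bracket m x y) s = 0"
      by (auto simp: ham_bracket_def intro!: sum.neutral)
    with assms show False by contradiction
  qed
qed

lemma ham_bracket_in_carrier [simp]:
  assumes x: "x \<in> ham_carrier m" and y: "y \<in> ham_carrier m"
  shows "ham_bracket m x y \<in> ham_carrier m"
proof (rule ham_carrierI)
  let ?X = "{r. fst x r \<noteq> 0}" and ?Y = "{r. fst y r \<noteq> 0}"
  have "{s. fst (ham_bracket m x y) s \<noteq> 0} \<subseteq> (\<lambda>(r, q) i. r i + q i) ` (?X \<times> ?Y) \<union> ?X \<union> ?Y"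
  proof
    fix s assume "s \<in> {s. fst (ham_bracket m x y) s \<noteq> 0}"
    then consider "fst x s \<noteq> 0" | "fst y s \<noteq> 0" | r where "fst x r \<noteq> 0" "fst y (\<lambda>i. s i - r i) \<noteq> 0"
      using fst_ham_bracket_neq_0D(2) by blast
    then show "s \<in> (\<lambda>(r, q) i. r i + q i) ` (?X \<times> ?Y) \<union> ?X \<union> ?Y"
    proof cases
      case 3
      then show ?thesis by (auto intro!: image_eqI[of _ _ "(r, \<lambda>i. s i - r i)"])
    qed auto
  qed
  moreover have "finite ((\<lambda>(r, q) i. r i + q i) ` (?X \<times> ?Y) \<union> ?X \<union> ?Y)"
    using ham_carrierD(1)[OF x] ham_carrierD(1)[OF y] by auto
  ultimately show "finite {s. fst (ham_bracket m x y) s \<noteq> 0}"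
    by (rule finite_subset)
next
  fix s assume s: "fst (ham_bracket m x y) s \<noteq> 0"
  have "s \<in> lattice (2*m)"
    using fst_ham_bracket_neq_0D(2)[OF s]
  proof (elim disjE exE conjE)
    fix r assume "fst x r \<noteq> 0" "fst y (\<lambda>i. s i - r i) \<noteq> 0"
    then have "(\<lambda>i. r i + (s i - r i)) \<in> lattice (2*m)"
      using lattice_add[OF ham_carrierD(2)[OF x] ham_carrierD(2)[OF y]] by blast
    then show ?thesis by simp
  qed (use ham_carrierD(2)[OF x] ham_carrierD(2)[OF y] in auto)
  then show "s \<in> lattice (2*m) \<and> s \<noteq> (\<lambda>_. 0)"
    using fst_ham_bracket_neq_0D(1)[OF s] by blast
qed simp

lemma ham_bracket_add_left [simp]:
  assumes "x \<in> ham_carrier m" and "y \<in> ham_carrier m"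
  shows "ham_bracket m (ham_add x y) z = ham_add (ham_bracket m x z) (ham_bracket m y z)"
proof -
  let ?S = "{r. fst x r \<noteq> 0} \<union> {r. fst y r \<noteq> 0}"
  have S: "finite ?S" using ham_carrierD(1)[OF assms(1)] ham_carrierD(1)[OF assms(2)] by blast
  have "{r. fst (ham_add x y) r \<noteq> 0} \<subseteq> ?S" by (auto simp: ham_add_def)
  then show ?thesis
    by (simp add: prod_eq_iff fun_eq_iff ham_add_def fst_ham_bracket_sum_over[OF S]
        sum.distrib algebra_simps)
qed

lemma ham_bracket_scale_left [simp]:
  assumes "x \<in> ham_carrier m"
  shows "ham_bracket m (ham_scale a x) z = ham_scale a (ham_bracket m x z)"
proof -
  have S: "finite {r. fst x r \<noteq> 0}" by (rule ham_carrierD(1)[OF assms])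
  have "{r. fst (ham_scale a x) r \<noteq> 0} \<subseteq> {r. fst x r \<noteq> 0}" by (auto simp: ham_scale_def)
  then show ?thesis
    by (simp add: prod_eq_iff fun_eq_iff ham_scale_def fst_ham_bracket_sum_over[OF S]
        sum_distrib_left algebra_simps)
qed

lemma ham_bracket_add_right [simp]:
  "ham_bracket m x (ham_add y z) = ham_add (ham_bracket m x y) (ham_bracket m x z)"
  by (simp add: ham_bracket_def ham_add_def prod_eq_iff fun_eq_iff sum.distrib algebra_simps)

lemma ham_bracket_scale_right [simp]:
  "ham_bracket m x (ham_scale a y) = ham_scale a (ham_bracket m x y)"
  by (simp add: ham_bracket_def ham_scale_def prod_eq_iff fun_eq_iff sum_distrib_left algebra_simps)

lemma ham_bracket_zero_left [simp]: "ham_bracket m ham_zero y = ham_zero"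
  and ham_bracket_zero_right [simp]: "ham_bracket m x ham_zero = ham_zero"
  by (simp_all add: ham_bracket_def ham_zero_def fun_eq_iff)

lemma ham_bracket_h_h:
  "ham_bracket m (ham_h r) (ham_h s) = ham_scale (of_int (Jpair m r s)) (ham_h (\<lambda>i. r i + s i))"
proof -
  have sub: "{q. fst (ham_h r) q \<noteq> 0} \<subseteq> {r}" by (auto simp: fst_ham_h split: if_splits)
  have diff_eq: "(\<lambda>i. t i - r i) = s \<longleftrightarrow> t = (\<lambda>i. r i + s i)" for t
    by (auto simp: fun_eq_iff algebra_simps)
  have "fst (ham_bracket m (ham_h r) (ham_h s)) t
      = fst (ham_scale (of_int (Jpair m r s)) (ham_h (\<lambda>i. r i + s i))) t" for t
    unfolding fst_ham_bracket_sum_over[OF finite.insertI[OF finite.emptyI] sub]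
    by (cases "r = (\<lambda>_. 0)"; cases "s = (\<lambda>_. 0)"; cases "t = (\<lambda>i. r i + s i)")
      (auto simp: fst_ham_h ham_scale_def diff_eq)
  then show ?thesis by (auto simp: prod_eq_iff ham_scale_def)
qed

lemma ham_bracket_h_d:
  "j < 2*m \<Longrightarrow> ham_bracket m (ham_h r) (ham_d j) = ham_scale (- of_int (r j)) (ham_h r)"
  by (auto simp: prod_eq_iff fun_eq_iff ham_bracket_def fst_ham_h ham_scale_def)

lemma ham_bracket_d_h:
  "i < 2*m \<Longrightarrow> ham_bracket m (ham_d i) (ham_h s) = ham_scale (of_int (s i)) (ham_h s)"
  by (auto simp: prod_eq_iff fun_eq_iff ham_bracket_def fst_ham_h ham_scale_def)

lemma ham_bracket_d_d: "ham_bracket m (ham_d i) (ham_d j) = ham_zero"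
  by (simp add: ham_bracket_def ham_zero_def fun_eq_iff)

lemmas ham_bracket_basis = ham_bracket_h_h ham_bracket_h_d ham_bracket_d_h ham_bracket_d_d

text \<open>The elements with vanishing first component form the Cartan subalgebra \<open>span {d_i}\<close>.\<close>

lemma ham_bracket_cartan_left:
  assumes "x \<in> ham_carrier m" and "fst y = (\<lambda>_. 0)"
  shows "ham_bracket m y x = (\<lambda>t. upair (2*m) (snd y) t * fst x t, \<lambda>_. 0)"
  using ham_carrier_fst_eq_0[OF assms(1)] assms(2) by (auto simp: ham_bracket_def fun_eq_iff)

lemma ham_bracket_cartan_h:
  assumes "r \<in> lattice (2*m)" and "fst y = (\<lambda>_. 0)"
  shows "ham_bracket m y (ham_h r) = ham_scale (upair (2*m) (snd y) r) (ham_h r)"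
proof (rule prod_eqI, rule ext)
  show "fst (ham_bracket m y (ham_h r)) t = fst (ham_scale (upair (2*m) (snd y) r) (ham_h r)) t" for t
    using ham_bracket_cartan_left[OF ham_h_in_carrier[OF assms(1)] assms(2)]
    by (cases "t = r") (simp_all add: ham_scale_def fst_ham_h)
qed (simp add: ham_scale_def)

lemma ham_bracket_d_left:
  assumes "x \<in> ham_carrier m" and "i < 2*m"
  shows "ham_bracket m (ham_d i) x = (\<lambda>t. of_int (t i) * fst x t, \<lambda>_. 0)"
  using ham_bracket_cartan_left[OF assms(1) fst_ham_d] assms(2) by simp

lemma ham_bracket_d_right:
  assumes "x \<in> ham_carrier m" and "j < 2*m"
  shows "ham_bracket m x (ham_d j) = (\<lambda>t. - of_int (t j) * fst x t, \<lambda>_. 0)"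
  using ham_carrier_fst_eq_0[OF assms(1)] assms(2)
  by (auto simp: prod_eq_iff fun_eq_iff fst_ham_bracket_sum_over[OF ham_carrierD(1)[OF assms(1)]])

lemma ham_h_zero [simp]: "ham_h (\<lambda>_. 0) = ham_zero"
  by (simp add: ham_h_def ham_zero_def)

section \<open>Linear maps and the Jacobi identity\<close>

lemma ham_carrier_induct_fst:
  assumes "x \<in> ham_carrier m"
    and zero: "P ham_zero"
    and step: "\<And>y a b. y \<in> ham_carrier m \<Longrightarrow> ham_basis m b \<Longrightarrow> P y \<Longrightarrow> P (ham_add y (ham_scale a b))"
  shows "P (fst x, \<lambda>_. 0)"
proof -
  let ?restrict = "\<lambda>S. (\<lambda>r. if r \<in> S then fst x r else 0, \<lambda>_. 0)"
  have "P (?restrict S) \<and> ?restrict S \<in> ham_carrier m" if "finite S" "S \<subseteq> {r. fst x r \<noteq> 0}" for S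
    using that
  proof (induction S rule: finite_induct)
    case empty
    have "?restrict {} = ham_zero" by (simp add: ham_zero_def)
    then show ?case using zero by simp
  next
    case (insert r S)
    have r: "r \<in> lattice (2*m)" "r \<noteq> (\<lambda>_. 0)"
      using insert.prems ham_carrierD(2,3)[OF assms(1)] by auto
    have "?restrict (insert r S) = ham_add (?restrict S) (ham_scale (fst x r) (ham_h r))"
    proof (rule prod_eqI, rule ext)
      show "fst (?restrict (insert r S)) q = fst (ham_add (?restrict S) (ham_scale (fst x r) (ham_h r))) q"
        for q
        using insert.hyps(2) r(2) by (cases "q = r") (auto simp: ham_add_def ham_scale_def ham_h_def)
    qed (simp add: ham_add_def ham_scale_def ham_h_def)
    then show ?case using insert step[OF _ ham_basis_h[OF r(1)]] r(1) by simp
  qed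
  from this[OF ham_carrierD(1)[OF assms(1)] order_refl]
  have "P (?restrict {r. fst x r \<noteq> 0})" ..
  moreover have "?restrict {r. fst x r \<noteq> 0} = (fst x, \<lambda>_. 0)" by auto
  ultimately show ?thesis by simp
qed

lemma ham_carrier_induct [consumes 1, case_names zero step]:
  assumes "x \<in> ham_carrier m"
    and zero: "P ham_zero"
    and step: "\<And>y a b. y \<in> ham_carrier m \<Longrightarrow> ham_basis m b \<Longrightarrow> P y \<Longrightarrow> P (ham_add y (ham_scale a b))"
  shows "P x"
proof -
  let ?truncate = "\<lambda>k. (fst x, \<lambda>i. if i < k then snd x i else 0)"
  have truncate: "P (?truncate k) \<and> ?truncate k \<in> ham_carrier m" if "k \<le> 2*m" for k
    using that
  proof (induction k)
    case 0
    have "(fst x, \<lambda>_. 0) \<in> ham_carrier m"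
      using ham_carrierD[OF assms(1)] by (intro ham_carrierI) auto
    then show ?case using ham_carrier_induct_fst[OF assms] by simp
  next
    case (Suc k)
    have "?truncate (Suc k) = ham_add (?truncate k) (ham_scale (snd x k) (ham_d k))"
      by (auto simp: fun_eq_iff ham_add_def ham_scale_def ham_d_def less_Suc_eq)
    then show ?case using Suc step[OF _ ham_basis_d[of k m]] by simp
  qed
  have "?truncate (2*m) = x"
    using ham_carrierD(4)[OF assms(1)] by (auto simp: prod_eq_iff fun_eq_iff)
  with truncate[OF order_refl] show ?thesis by simp
qed

definition ham_linear :: "nat \<Rightarrow> ('k::field ham \<Rightarrow> 'k ham) \<Rightarrow> bool" where
  "ham_linear m F \<longleftrightarrow> (\<forall>x\<in>ham_carrier m. \<forall>y\<in>ham_carrier m. \<forall>a.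
     F (ham_add x (ham_scale a y)) = ham_add (F x) (ham_scale a (F y)))"

lemma ham_linearD:
  "ham_linear m F \<Longrightarrow> x \<in> ham_carrier m \<Longrightarrow> y \<in> ham_carrier m \<Longrightarrow>
    F (ham_add x (ham_scale a y)) = ham_add (F x) (ham_scale a (F y))"
  by (simp add: ham_linear_def)

lemma ham_linear_zero:
  assumes "ham_linear m F"
  shows "F ham_zero = ham_zero"
proof -
  have "ham_add ham_zero (ham_scale (-1) ham_zero) = (ham_zero :: 'a ham)"
    by (simp add: ham_ops_pointwise)
  then have "F ham_zero = ham_add (F ham_zero) (ham_scale (-1) (F ham_zero))"
    using ham_linearD[OF assms, of ham_zero ham_zero "-1"] by simp
  then show ?thesis by (simp add: ham_ops_pointwise)
qed

lemma ham_linear_scale_eq: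
  assumes "ham_linear m F" and "y \<in> ham_carrier m"
  shows "F (ham_scale a y) = ham_scale a (F y)"
proof -
  have "ham_add ham_zero (ham_scale a y) = ham_scale a y"
    by (simp add: ham_ops_pointwise)
  then show ?thesis
    using ham_linearD[OF assms(1) ham_zero_in_carrier assms(2), of a] ham_linear_zero[OF assms(1)]
    by (simp add: ham_ops_pointwise)
qed

lemma ham_linear_eq_on_carrier:
  assumes F: "ham_linear m F" and G: "ham_linear m G"
    and basis: "\<And>b. ham_basis m b \<Longrightarrow> F b = G b"
    and "x \<in> ham_carrier m"
  shows "F x = G x"
  using assms(4)
proof (induction x rule: ham_carrier_induct)
  case zero
  show ?case by (simp add: ham_linear_zero[OF F] ham_linear_zero[OF G])
next
  case (step y a b)
  have "y \<in> ham_carrier m" "b \<in> ham_carrier m"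
    using step.hyps(1) ham_basis_in_carrier[OF step.hyps(2)] by auto
  then show ?case
    using ham_linearD[OF F] ham_linearD[OF G] basis step by simp
qed

lemma ham_linear_bracket_left: "ham_linear m (\<lambda>x. ham_bracket m x z)"
  by (simp add: ham_linear_def)

lemma ham_linear_bracket_right: "ham_linear m (ham_bracket m x)"
  by (simp add: ham_linear_def)

lemma ham_linear_add:
  assumes "ham_linear m F" and "ham_linear m G"
  shows "ham_linear m (\<lambda>x. ham_add (F x) (G x))"
  using assms by (simp add: ham_linear_def ham_ops_pointwise algebra_simps)

lemma ham_linear_comp:
  assumes "ham_linear m F" and "ham_linear m G" and "\<And>x. x \<in> ham_carrier m \<Longrightarrow> G x \<in> ham_carrier m"
  shows "ham_linear m (\<lambda>x. F (G x))"
  using assms by (simp add: ham_linear_def)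

lemma ham_jacobi_basis:
  assumes "ham_basis m x" and "ham_basis m y" and "ham_basis m z"
  shows "ham_bracket m x (ham_bracket m y z) =
    ham_add (ham_bracket m (ham_bracket m x y) z) (ham_bracket m y (ham_bracket m x z))"
  using assms(1)
proof (cases rule: ham_basis_cases)
  case (h r)
  note x = this
  from assms(2) show ?thesis
  proof (cases rule: ham_basis_cases)
    case (h s)
    from assms(3) show ?thesis
      by (cases rule: ham_basis_cases)
        (simp_all add: x h ham_bracket_basis add.assoc,
         simp_all add: ham_ops_pointwise algebra_simps Jpair_antisym[of m s r])
  next
    case (d i)
    from assms(3) show ?thesis
      by (cases rule: ham_basis_cases)
        (simp_all add: x d ham_bracket_basis add.assoc, simp_all add: ham_ops_pointwise algebra_simps)
  qed
next
  case (d i)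
  from assms(2,3) show ?thesis
    by (elim ham_basis_cases)
      (simp_all add: d ham_bracket_basis add.assoc, simp_all add: ham_ops_pointwise algebra_simps)
qed

lemma ham_jacobi:
  assumes "x \<in> ham_carrier m" and "y \<in> ham_carrier m" and "z \<in> ham_carrier m"
  shows "ham_bracket m x (ham_bracket m y z) =
    ham_add (ham_bracket m (ham_bracket m x y) z) (ham_bracket m y (ham_bracket m x z))"
proof -
  note left = ham_linear_bracket_left and right = ham_linear_bracket_right
  have z_ext: "ham_bracket m b (ham_bracket m c w) =
      ham_add (ham_bracket m (ham_bracket m b c) w) (ham_bracket m c (ham_bracket m b w))"
    if "ham_basis m b" "ham_basis m c" "w \<in> ham_carrier m" for b c w
    using that ham_basis_in_carrier[OF that(1)] ham_basis_in_carrier[OF that(2)]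
    by (intro ham_linear_eq_on_carrier[OF ham_linear_comp[OF right right]
          ham_linear_add[OF right ham_linear_comp[OF right right]] ham_jacobi_basis]) auto
  have y_ext: "ham_bracket m b (ham_bracket m v w) =
      ham_add (ham_bracket m (ham_bracket m b v) w) (ham_bracket m v (ham_bracket m b w))"
    if "ham_basis m b" "v \<in> ham_carrier m" "w \<in> ham_carrier m" for b v w
    using that ham_basis_in_carrier[OF that(1)]
    by (intro ham_linear_eq_on_carrier[OF ham_linear_comp[OF right left]
          ham_linear_add[OF ham_linear_comp[OF left right] left] z_ext]) auto
  show ?thesis
    using assms
    by (intro ham_linear_eq_on_carrier[OF left
          ham_linear_add[OF ham_linear_comp[OF left left] ham_linear_comp[OF right left]] y_ext]) auto
qed

section \<open>Inner derivations\<close>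

lemma ham_derivationsD:
  assumes "D \<in> ham_derivations m"
  shows "\<And>x. x \<in> ham_carrier m \<Longrightarrow> D x \<in> ham_carrier m"
    and "\<And>x y a b. x \<in> ham_carrier m \<Longrightarrow> y \<in> ham_carrier m \<Longrightarrow>
      D (ham_add (ham_scale a x) (ham_scale b y)) = ham_add (ham_scale a (D x)) (ham_scale b (D y))"
    and "\<And>x y. x \<in> ham_carrier m \<Longrightarrow> y \<in> ham_carrier m \<Longrightarrow>
      D (ham_bracket m x y) = ham_add (ham_bracket m (D x) y) (ham_bracket m x (D y))"
    and "\<And>x. x \<notin> ham_carrier m \<Longrightarrow> D x = ham_zero"
  using assms unfolding ham_derivations_def by blast+

lemma ham_derivation_linear:
  assumes "D \<in> ham_derivations m"
  shows "ham_linear m D"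
proof -
  have "D (ham_add (ham_scale 1 x) (ham_scale a y)) = ham_add (ham_scale 1 (D x)) (ham_scale a (D y))"
    if "x \<in> ham_carrier m" "y \<in> ham_carrier m" for x y a
    using assms that unfolding ham_derivations_def by blast
  moreover have "ham_scale 1 x = x" for x :: "'a ham" by (simp add: ham_scale_def)
  ultimately show ?thesis by (simp add: ham_linear_def)
qed

lemma ham_derivation_eqI:
  assumes D: "D \<in> ham_derivations m" and E: "E \<in> ham_derivations m"
    and "\<And>b. ham_basis m b \<Longrightarrow> D b = E b"
  shows "D = E"
proof
  fix x
  show "D x = E x"
    using ham_linear_eq_on_carrier[OF ham_derivation_linear[OF D] ham_derivation_linear[OF E] assms(3)]
      ham_derivationsD(4)[OF D] ham_derivationsD(4)[OF E]
    by (cases "x \<in> ham_carrier m") simp_all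
qed

lemma ham_derivations_lin_comb:
  fixes D E :: "'k::field ham \<Rightarrow> 'k ham"
  assumes D: "D \<in> ham_derivations m" and E: "E \<in> ham_derivations m"
  shows "der_add m (der_scale m a D) (der_scale m b E) \<in> ham_derivations m"
proof -
  let ?F = "der_add m (der_scale m a D) (der_scale m b E)"
  have F: "?F x = ham_add (ham_scale a (D x)) (ham_scale b (E x))" if "x \<in> ham_carrier m" for x
    using that by (simp add: der_add_def der_scale_def)
  note D_simps = ham_derivationsD[OF D] and E_simps = ham_derivationsD[OF E]
  show ?thesis
    unfolding ham_derivations_def
  proof (intro CollectI conjI ballI allI impI)
    fix x y :: "'k ham" and c d :: 'k
    assume "x \<in> ham_carrier m" "y \<in> ham_carrier m"
    then show "?F (ham_add (ham_scale c x) (ham_scale d y)) = ham_add (ham_scale c (?F x)) (ham_scale d (?F y))"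
      by (simp add: F D_simps E_simps) (simp add: ham_ops_pointwise algebra_simps)
  next
    fix x y :: "'k ham"
    assume "x \<in> ham_carrier m" "y \<in> ham_carrier m"
    then show "?F (ham_bracket m x y) = ham_add (ham_bracket m (?F x) y) (ham_bracket m x (?F y))"
      by (simp add: F D_simps E_simps) (simp add: ham_ops_pointwise algebra_simps)
  qed (simp_all add: F D_simps E_simps der_add_def der_scale_def)
qed

definition ham_ad :: "nat \<Rightarrow> 'k::field ham \<Rightarrow> 'k ham \<Rightarrow> 'k ham" where
  "ham_ad m x = (\<lambda>y. if y \<in> ham_carrier m then ham_bracket m x y else ham_zero)"

lemma ham_ad_in_derivations:
  assumes "x \<in> ham_carrier m"
  shows "ham_ad m x \<in> ham_derivations m"
  using assms ham_jacobi[OF assms] by (auto simp: ham_derivations_def ham_ad_def)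

lemma ham_ad_lin_comb:
  assumes "x \<in> ham_carrier m" and "y \<in> ham_carrier m"
  shows "der_add m (der_scale m a (ham_ad m x)) (der_scale m b (ham_ad m y))
    = ham_ad m (ham_add (ham_scale a x) (ham_scale b y))"
  using assms by (auto simp: fun_eq_iff der_add_def der_scale_def ham_ad_def)

lemma ham_ad_bracket:
  assumes "x \<in> ham_carrier m" and "y \<in> ham_carrier m"
  shows "der_bracket m (ham_ad m x) (ham_ad m y) = ham_ad m (ham_bracket m x y)"
  using assms ham_jacobi[OF assms]
  by (auto simp: fun_eq_iff der_bracket_def ham_ad_def) (simp add: ham_ops_pointwise algebra_simps)

lemma ham_center_trivial:
  fixes x y :: "'k::field_char_0 ham"
  assumes x: "x \<in> ham_carrier m" and y: "y \<in> ham_carrier m"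
    and eq: "\<And>z. z \<in> ham_carrier m \<Longrightarrow> ham_bracket m x z = ham_bracket m y z"
  shows "x = y"
proof -
  have "fst x t = fst y t" for t
  proof (cases "t \<in> lattice (2*m) \<and> t \<noteq> (\<lambda>_. 0)")
    case True
    then obtain j where j: "j < 2*m" "t j \<noteq> 0" by (auto elim: lattice_nonzero_coordinate)
    from eq[of "ham_d j"] j(1) have "- of_int (t j) * fst x t = - of_int (t j) * fst y t"
      by (simp add: ham_bracket_d_right[OF x] ham_bracket_d_right[OF y] fun_eq_iff)
    with j(2) show ?thesis by simp
  qed (use ham_carrier_fst_eq_0[OF x] ham_carrier_fst_eq_0[OF y] in auto)
  then have fst_eq: "fst x = fst y" ..
  have "snd x j = snd y j" for j
  proof (cases "j < 2*m")
    case True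
    from eq[of "ham_h (unit_vec j)"] True
    have "fst (ham_bracket m x (ham_h (unit_vec j))) (unit_vec j)
        = fst (ham_bracket m y (ham_h (unit_vec j))) (unit_vec j)" by simp
    with True show ?thesis by (simp add: ham_bracket_def fst_eq fst_ham_h)
  qed (use ham_carrierD(4)[OF x] ham_carrierD(4)[OF y] in simp)
  with fst_eq show ?thesis by (simp add: prod_eq_iff fun_eq_iff)
qed

lemma inj_on_ham_ad: "inj_on (ham_ad m) (ham_carrier m :: 'k::field_char_0 ham set)"
proof (rule inj_onI)
  fix x y :: "'k ham"
  assume x: "x \<in> ham_carrier m" and y: "y \<in> ham_carrier m" and eq: "ham_ad m x = ham_ad m y"
  have "ham_bracket m x z = ham_bracket m y z" if "z \<in> ham_carrier m" for z
    using fun_cong[OF eq, of z] that by (simp add: ham_ad_def)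
  then show "x = y" by (rule ham_center_trivial[OF x y])
qed

section \<open>Every derivation is inner\<close>

lemma ham_derivation_d_relation:
  assumes D: "D \<in> ham_derivations m" and i: "i < 2*m" and j: "j < 2*m"
  shows "of_int (t j) * fst (D (ham_d i)) t = of_int (t i) * fst (D (ham_d j)) t"
proof -
  have "ham_zero = D (ham_bracket m (ham_d i) (ham_d j))"
    by (simp add: ham_bracket_d_d ham_linear_zero[OF ham_derivation_linear[OF D]])
  also have "\<dots> = ham_add (ham_bracket m (D (ham_d i)) (ham_d j)) (ham_bracket m (ham_d i) (D (ham_d j)))"
    using i j by (simp add: ham_derivationsD(3)[OF D])
  also have "\<dots> = ham_add (\<lambda>t. - of_int (t j) * fst (D (ham_d i)) t, \<lambda>_. 0)
      (\<lambda>t. of_int (t i) * fst (D (ham_d j)) t, \<lambda>_. 0)"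
    using i j by (simp add: ham_bracket_d_right ham_bracket_d_left ham_derivationsD(1)[OF D])
  finally show ?thesis
    by (simp add: ham_ops_pointwise)
qed

lemma ham_derivation_d_part_inner:
  fixes D :: "'k::field_char_0 ham \<Rightarrow> 'k ham"
  assumes D: "D \<in> ham_derivations m"
  obtains x where "x \<in> ham_carrier m"
    and "\<And>i. i < 2*m \<Longrightarrow> fst (D (ham_d i)) = fst (ham_bracket m x (ham_d i))"
proof -
  have Dd: "D (ham_d i) \<in> ham_carrier m" if "i < 2*m" for i
    using that by (simp add: ham_derivationsD(1)[OF D])
  obtain g where g: "\<And>i t. i < 2*m \<Longrightarrow> fst (D (ham_d i)) t = of_int (t i) * g t"
    and g_supp: "\<And>t. g t \<noteq> 0 \<Longrightarrow> \<exists>i<2*m. fst (D (ham_d i)) t \<noteq> 0"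
    using common_factor_of_proportional[of "2*m" "\<lambda>i. fst (D (ham_d i))"]
      ham_derivation_d_relation[OF D] ham_carrierD(2,3)[OF Dd] by blast
  define x :: "'k ham" where "x = (\<lambda>t. - g t, \<lambda>_. 0)"
  have "x \<in> ham_carrier m"
  proof (rule ham_carrierI)
    have "{t. fst x t \<noteq> 0} \<subseteq> (\<Union>i<2*m. {t. fst (D (ham_d i)) t \<noteq> 0})"
      using g_supp by (auto simp: x_def)
    moreover have "finite (\<Union>i<2*m. {t. fst (D (ham_d i)) t \<noteq> 0})"
      using ham_carrierD(1)[OF Dd] by blast
    ultimately show "finite {t. fst x t \<noteq> 0}" by (rule finite_subset)
  next
    fix t assume "fst x t \<noteq> 0"
    then obtain i where "i < 2*m" "fst (D (ham_d i)) t \<noteq> 0" using g_supp by (auto simp: x_def)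
    then show "t \<in> lattice (2*m) \<and> t \<noteq> (\<lambda>_. 0)" using ham_carrierD(2,3)[OF Dd] by blast
  qed (simp add: x_def)
  moreover have "fst (D (ham_d i)) = fst (ham_bracket m x (ham_d i))" if "i < 2*m" for i
    using that ham_bracket_d_right[OF \<open>x \<in> ham_carrier m\<close> that] by (simp add: fun_eq_iff g x_def)
  ultimately show ?thesis by (rule that)
qed

lemma ham_derivation_weight_equation:
  assumes E: "E \<in> ham_derivations m" and k: "k < 2*m" and Ek: "fst (E (ham_d k)) = (\<lambda>_. 0)"
    and r: "r \<in> lattice (2*m)"
  shows "of_int (r k) * fst (E (ham_h r)) t
      = upair (2*m) (snd (E (ham_d k))) t * fst (ham_h r) t + of_int (t k) * fst (E (ham_h r)) t"
    and "of_int (r k) * snd (E (ham_h r)) i = 0"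
proof -
  have Eh: "E (ham_h r) \<in> ham_carrier m" using r by (simp add: ham_derivationsD(1)[OF E])
  have "ham_scale (of_int (r k)) (E (ham_h r)) = E (ham_bracket m (ham_d k) (ham_h r))"
    using k r by (simp add: ham_bracket_d_h ham_linear_scale_eq[OF ham_derivation_linear[OF E]])
  also have "\<dots> = ham_add (ham_bracket m (E (ham_d k)) (ham_h r)) (ham_bracket m (ham_d k) (E (ham_h r)))"
    using k r by (simp add: ham_derivationsD(3)[OF E])
  also have "\<dots> = ham_add (\<lambda>t. upair (2*m) (snd (E (ham_d k))) t * fst (ham_h r) t, \<lambda>_. 0)
      (\<lambda>t. of_int (t k) * fst (E (ham_h r)) t, \<lambda>_. 0)"
    using k r by (simp add: ham_bracket_cartan_left[OF _ Ek] ham_bracket_d_left[OF Eh])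
  finally have eq: "ham_scale (of_int (r k)) (E (ham_h r)) = \<dots>" .
  from arg_cong[OF eq, of "\<lambda>x. fst x t"]
  show "of_int (r k) * fst (E (ham_h r)) t
      = upair (2*m) (snd (E (ham_d k))) t * fst (ham_h r) t + of_int (t k) * fst (E (ham_h r)) t"
    by (simp add: ham_add_def ham_scale_def)
  from arg_cong[OF eq, of "\<lambda>x. snd x i"] show "of_int (r k) * snd (E (ham_h r)) i = 0"
    by (simp add: ham_add_def ham_scale_def)
qed

lemma ham_derivation_h_eigen:
  fixes E :: "'k::field_char_0 ham \<Rightarrow> 'k ham"
  assumes E: "E \<in> ham_derivations m" and Ed: "\<And>k. k < 2*m \<Longrightarrow> fst (E (ham_d k)) = (\<lambda>_. 0)"
    and r: "r \<in> lattice (2*m)"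
  shows "E (ham_h r) = ham_scale (fst (E (ham_h r)) r) (ham_h r)"
proof (cases "r = (\<lambda>_. 0)")
  case True
  then show ?thesis
    by (simp add: ham_linear_zero[OF ham_derivation_linear[OF E]]) (simp add: ham_ops_pointwise)
next
  case False
  note weight = ham_derivation_weight_equation[OF E _ Ed r]
  obtain k0 where k0: "k0 < 2*m" "r k0 \<noteq> 0" using r False by (rule lattice_nonzero_coordinate)
  have snd_eq: "snd (E (ham_h r)) i = 0" for i
    using weight(2)[OF k0(1) k0(1)] k0(2) by simp
  have fst_eq: "fst (E (ham_h r)) t = 0" if "t \<noteq> r" for t
  proof (cases "t \<in> lattice (2*m)")
    case True
    \<comment> \<open>\<open>ham_h r\<close> and \<open>ham_h t\<close> have different weights under some \<open>ham_d k\<close>.\<close>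
    from \<open>t \<noteq> r\<close> obtain k where k: "r k \<noteq> t k" by (metis ext)
    moreover have "k < 2*m"
      using k True r unfolding lattice_def by (cases "k < 2*m") auto
    ultimately have k: "k < 2*m" "r k \<noteq> t k" by blast+
    have "(of_int (r k) - of_int (t k)) * fst (E (ham_h r)) t = 0"
      using weight(1)[OF k(1) k(1), of t] that by (simp add: fst_ham_h algebra_simps)
    with k(2) show ?thesis by simp
  next
    case False
    with r show ?thesis
      by (intro ham_carrier_fst_eq_0[OF ham_derivationsD(1)[OF E]]) simp_all
  qed
  show ?thesis
  proof (rule prod_eqI, rule ext)
    show "fst (E (ham_h r)) t = fst (ham_scale (fst (E (ham_h r)) r) (ham_h r)) t" for t
      using fst_eq[of t] False by (cases "t = r") (simp_all add: ham_scale_def fst_ham_h)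
  qed (simp add: ham_scale_def snd_eq fun_eq_iff)
qed

lemma ham_derivation_d_zero:
  fixes E :: "'k::field_char_0 ham \<Rightarrow> 'k ham"
  assumes E: "E \<in> ham_derivations m" and Ed: "\<And>k. k < 2*m \<Longrightarrow> fst (E (ham_d k)) = (\<lambda>_. 0)"
    and k: "k < 2*m"
  shows "E (ham_d k) = ham_zero"
proof -
  have "snd (E (ham_d k)) j = 0" for j
  proof (cases "j < 2*m")
    case True
    from ham_derivation_weight_equation(1)[OF E k Ed[OF k], of "unit_vec j" "unit_vec j"] True
    show ?thesis by (simp add: fst_ham_h)
  qed (use ham_carrierD(4)[OF ham_derivationsD(1)[OF E ham_d_in_carrier[OF k]]] in simp)
  with Ed[OF k] show ?thesis by (simp add: prod_eq_iff fun_eq_iff ham_zero_def)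
qed

lemma ham_derivation_eigenvalue_additive:
  fixes E :: "'k::field_char_0 ham \<Rightarrow> 'k ham"
  assumes E: "E \<in> ham_derivations m"
    and eigen: "\<And>r. r \<in> lattice (2*m) \<Longrightarrow> E (ham_h r) = ham_scale (c r) (ham_h r)"
    and r: "r \<in> lattice (2*m)" and s: "s \<in> lattice (2*m)" and J: "Jpair m r s \<noteq> 0"
  shows "c (\<lambda>i. r i + s i) = c r + c s"
proof -
  let ?rs = "\<lambda>i. r i + s i" and ?J = "of_int (Jpair m r s) :: 'k"
  have rs: "?rs \<noteq> (\<lambda>_. 0)"
  proof
    assume "?rs = (\<lambda>_. 0)"
    then have "Jpair m ?rs s = 0" by simp
    with J show False by simp
  qed
  have "ham_scale ?J (ham_scale (c ?rs) (ham_h ?rs)) = E (ham_bracket m (ham_h r) (ham_h s))"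
    using r s by (simp add: ham_bracket_h_h ham_linear_scale_eq[OF ham_derivation_linear[OF E]] eigen)
  also have "\<dots> = ham_add (ham_bracket m (E (ham_h r)) (ham_h s)) (ham_bracket m (ham_h r) (E (ham_h s)))"
    using r s by (simp add: ham_derivationsD(3)[OF E])
  also have "\<dots> = ham_add (ham_scale (c r) (ham_scale ?J (ham_h ?rs))) (ham_scale (c s) (ham_scale ?J (ham_h ?rs)))"
    using r s by (simp add: eigen ham_bracket_h_h)
  finally have "?J * c ?rs = ?J * (c r + c s)"
    using rs by (auto simp: ham_ops_pointwise fst_ham_h algebra_simps dest: spec[of _ ?rs])
  with J show ?thesis by simp
qed

lemma ham_derivation_eq_ad_cartan:
  fixes E :: "'k::field_char_0 ham \<Rightarrow> 'k ham"
  assumes E: "E \<in> ham_derivations m" and E_d: "\<And>k. k < 2*m \<Longrightarrow> fst (E (ham_d k)) = (\<lambda>_. 0)"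
  shows "\<exists>v\<in>ham_carrier m. E = ham_ad m v"
proof -
  define c where "c r = fst (E (ham_h r)) r" for r
  have eigen: "E (ham_h r) = ham_scale (c r) (ham_h r)" if "r \<in> lattice (2*m)" for r
    unfolding c_def using E E_d that by (rule ham_derivation_h_eigen)
  have "c (\<lambda>_. 0) = 0"
    by (simp add: c_def ham_linear_zero[OF ham_derivation_linear[OF E]]) (simp add: ham_zero_def)
  then have c_additive: "c (\<lambda>i. r i + s i) = c r + c s"
    if "r \<in> lattice (2*m)" "s \<in> lattice (2*m)" for r s
    using Jpair_additive_extends[of c, OF _ ham_derivation_eigenvalue_additive[OF E eigen] that] by blast
  define v :: "'k ham" where "v = (\<lambda>_. 0, \<lambda>i. if i < 2*m then c (unit_vec i) else 0)"
  have v: "v \<in> ham_carrier m" by (rule ham_carrierI) (simp_all add: v_def)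
  have "E = ham_ad m v"
  proof (rule ham_derivation_eqI[OF E ham_ad_in_derivations[OF v]])
    fix b :: "'k ham"
    assume "ham_basis m b"
    then show "E b = ham_ad m v b"
    proof (cases rule: ham_basis_cases)
      case (h r)
      have "c r = upair (2*m) (snd v) r"
        using lattice_additive_eq_upair[of "2*m" c r] c_additive h(1)
        by (simp add: v_def upair_def)
      with h show ?thesis by (simp add: eigen ham_ad_def ham_bracket_cartan_h v_def)
    next
      case (d i)
      then show ?thesis
        using ham_derivation_d_zero[OF E E_d] ham_bracket_cartan_left[OF ham_d_in_carrier[OF d(1)], of v]
        by (simp add: ham_ad_def v_def ham_zero_def)
    qed
  qed
  with v show ?thesis by blast
qed

lemma ham_derivation_inner:
  fixes D :: "'k::field_char_0 ham \<Rightarrow> 'k ham"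
  assumes D: "D \<in> ham_derivations m"
  shows "\<exists>x\<in>ham_carrier m. D = ham_ad m x"
proof -
  obtain x0 where x0: "x0 \<in> ham_carrier m"
    and D_d: "\<And>i. i < 2*m \<Longrightarrow> fst (D (ham_d i)) = fst (ham_bracket m x0 (ham_d i))"
    using ham_derivation_d_part_inner[OF D] by blast
  define E where "E = der_add m (der_scale m 1 D) (der_scale m (-1) (ham_ad m x0))"
  have E: "E \<in> ham_derivations m"
    unfolding E_def using D ham_ad_in_derivations[OF x0] by (rule ham_derivations_lin_comb)
  have E_eq: "E y = ham_add (D y) (ham_scale (-1) (ham_bracket m x0 y))" if "y \<in> ham_carrier m" for y
    using that by (simp add: E_def der_add_def der_scale_def ham_ad_def ham_scale_def)
  have "fst (E (ham_d k)) = (\<lambda>_. 0)" if "k < 2*m" for k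
    using that E_eq[of "ham_d k"] D_d[OF that] by (simp add: ham_add_def ham_scale_def)
  then obtain v where v: "v \<in> ham_carrier m" and E_ad: "E = ham_ad m v"
    using ham_derivation_eq_ad_cartan[OF E] by blast
  have "D = ham_ad m (ham_add x0 v)"
  proof
    fix y
    show "D y = ham_ad m (ham_add x0 v) y"
    proof (cases "y \<in> ham_carrier m")
      case True
      with fun_cong[OF E_ad, of y] E_eq[OF True] x0 v show ?thesis
        by (simp add: ham_ad_def) (simp add: ham_ops_pointwise algebra_simps)
    qed (simp add: ham_ad_def ham_derivationsD(4)[OF D])
  qed
  with x0 v show ?thesis by auto
qed

lemma bij_betw_ham_ad:
  "bij_betw (ham_ad m) (ham_carrier m :: 'k::field_char_0 ham set) (ham_derivations m)"
  unfolding bij_betw_def using inj_on_ham_ad ham_ad_in_derivations ham_derivation_inner by blast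

theorem theorem4p6:
  fixes m :: nat
  assumes "m \<ge> 1"
  shows "\<exists>\<phi> :: ((('k::{alg_closed_field, field_char_0}) ham \<Rightarrow> 'k ham) \<Rightarrow> 'k ham).
           der_ham_iso m \<phi>"
proof -
  define \<phi> where "\<phi> = inv_into (ham_carrier m :: 'k ham set) (ham_ad m)"
  have "bij_betw \<phi> (ham_derivations m) (ham_carrier m)"
    unfolding \<phi>_def by (rule bij_betw_inv_into[OF bij_betw_ham_ad])
  moreover have \<phi>_ad: "\<phi> (ham_ad m x) = x" if "x \<in> ham_carrier m" for x
    unfolding \<phi>_def using inj_on_ham_ad that by (rule inv_into_f_f)
  moreover have "\<phi> (der_add m (der_scale m a D) (der_scale m b E)) = ham_add (ham_scale a (\<phi> D)) (ham_scale b (\<phi> E))"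
    and "\<phi> (der_bracket m D E) = ham_bracket m (\<phi> D) (\<phi> E)"
    if D: "D \<in> ham_derivations m" and E: "E \<in> ham_derivations m" for D E a b
  proof -
    obtain x where "x \<in> ham_carrier m" "D = ham_ad m x"
      using ham_derivation_inner[OF D] by blast
    moreover obtain y where "y \<in> ham_carrier m" "E = ham_ad m y"
      using ham_derivation_inner[OF E] by blast
    ultimately show "\<phi> (der_add m (der_scale m a D) (der_scale m b E)) = ham_add (ham_scale a (\<phi> D)) (ham_scale b (\<phi> E))"
      and "\<phi> (der_bracket m D E) = ham_bracket m (\<phi> D) (\<phi> E)"
      by (simp_all add: ham_ad_lin_comb ham_ad_bracket \<phi>_ad)
  qed
  ultimately have "der_ham_iso m \<phi>" unfolding der_ham_iso_def by blast
  then show ?thesis by blast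
qed

end
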